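(* Let $(\mathcal{A},\cdot,[\cdot,\cdot],\alpha)$ be a Hom-Poisson algebra, let $\lambda\in\mathbb{C}$ be fixed, and let $D$ be a derivation of $(\mathcal{A},\cdot)$ such that $D\alpha=\alpha D$ and $D([x,y])=[D(x),y]+[x,D(y)]+\lambda[x,y]$ for all $x,y\in\mathcal{A}$. Define $x\circ y=x\cdot D(y)+\lambda\, x\cdot y$ for $x,y\in\mathcal{A}$. Then $(\mathcal{A},[\cdot,\cdot],\circ,\alpha)$ is a Hom Gel'fand-Dorfman bialgebra.
   Context: All vector spaces are over $\mathbb{C}$. A Hom-associative algebra is a vector space with a bilinear map $\cdot$ and linear map $\alpha$ such that $\alpha(x)\cdot(y\cdot z)=(x\cdot y)\cdot\alpha(z)$; it is commutative if $x\cdot y=y\cdot x$. A Hom-Lie algebra is a vector space with a bilinear map $[\cdot,\cdot]$ and linear map $\alpha$ with $[x,y]=-[y,x]$ and $[[x,y],\alpha(z)]+[[y,z],\alpha(x)]+[[z,x],\alpha(y)]=0$. A Hom-Poisson algebra is a vector space $\mathcal{A}$ with operations $\cdot$, $[\cdot,\cdot]$ and a linear endomorphism $\alpha$ such that $(\mathcal{A},\cdot,\alpha)$ is a commutative Hom-associative algebra, $(\mathcal{A},[\cdot,\cdot],\alpha)$ is a Hom-Lie algebra, and $[\alpha(x),y\cdot z]=\alpha(y)\cdot[x,z]+\alpha(z)\cdot[x,y]$ for all $x,y,z$. A derivation of $(\mathcal{A},\cdot)$ is a linear map $D$ with $D(x\cdot y)=D(x)\cdot y+x\cdot D(y)$.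 A Hom-Novikov algebra is a vector space with a bilinear operation $\circ$ and a linear endomorphism $\alpha$ such that $(x\circ y)\circ\alpha(z)-\alpha(x)\circ(y\circ z)=(y\circ x)\circ\alpha(z)-\alpha(y)\circ(x\circ z)$ and $(x\circ y)\circ\alpha(z)=(x\circ z)\circ\alpha(y)$. A Hom Gel'fand-Dorfman bialgebra is a vector space $\mathcal{A}$ with a linear endomorphism $\alpha$ and two bilinear operations $[\cdot,\cdot],\circ$ such that $(\mathcal{A},[\cdot,\cdot],\alpha)$ is a Hom-Lie algebra, $(\mathcal{A},\circ,\alpha)$ is a Hom-Novikov algebra, and $[x\circ y,\alpha(z)]-[x\circ z,\alpha(y)]+[x,y]\circ\alpha(z)-[x,z]\circ\alpha(y)-\alpha(x)\circ[y,z]=0$ for all $x,y,z$. *)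

theory Defs
  imports Complex_Main
begin

text \<open>A complex vector space is modelled as a type 'a of class ab_group_add together with a
  scalar multiplication sc :: complex => 'a => 'a satisfying the vector space axioms
  (locale vector_space).\<close>

definition clin :: "(complex \<Rightarrow> 'a::ab_group_add \<Rightarrow> 'a) \<Rightarrow> ('a \<Rightarrow> 'a) \<Rightarrow> bool" where
  "clin sc f \<longleftrightarrow> Vector_Spaces.linear sc sc f"

definition cbilinear :: "(complex \<Rightarrow> 'a::ab_group_add \<Rightarrow> 'a) \<Rightarrow> ('a \<Rightarrow> 'a \<Rightarrow> 'a) \<Rightarrow> bool" where
  "cbilinear sc m \<longleftrightarrow> (\<forall>x. clin sc (m x)) \<and> (\<forall>y. clin sc (\<lambda>x. m x y))"

definition hom_assoc :: "(complex \<Rightarrow> 'a::ab_group_add \<Rightarrow> 'a) \<Rightarrow> ('a \<Rightarrow> 'a \<Rightarrow> 'a) \<Rightarrow> ('a \<Rightarrow> 'a) \<Rightarrow> bool" where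
  "hom_assoc sc m \<alpha> \<longleftrightarrow> vector_space sc \<and> cbilinear sc m \<and> clin sc \<alpha> \<and>
     (\<forall>x y z. m (\<alpha> x) (m y z) = m (m x y) (\<alpha> z))"

definition comm_hom_assoc :: "(complex \<Rightarrow> 'a::ab_group_add \<Rightarrow> 'a) \<Rightarrow> ('a \<Rightarrow> 'a \<Rightarrow> 'a) \<Rightarrow> ('a \<Rightarrow> 'a) \<Rightarrow> bool" where
  "comm_hom_assoc sc m \<alpha> \<longleftrightarrow> hom_assoc sc m \<alpha> \<and> (\<forall>x y. m x y = m y x)"

definition hom_lie :: "(complex \<Rightarrow> 'a::ab_group_add \<Rightarrow> 'a) \<Rightarrow> ('a \<Rightarrow> 'a \<Rightarrow> 'a) \<Rightarrow> ('a \<Rightarrow> 'a) \<Rightarrow> bool" where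
  "hom_lie sc b \<alpha> \<longleftrightarrow> vector_space sc \<and> cbilinear sc b \<and> clin sc \<alpha> \<and>
     (\<forall>x y. b x y = - b y x) \<and>
     (\<forall>x y z. b (b x y) (\<alpha> z) + b (b y z) (\<alpha> x) + b (b z x) (\<alpha> y) = 0)"

definition hom_poisson :: "(complex \<Rightarrow> 'a::ab_group_add \<Rightarrow> 'a) \<Rightarrow> ('a \<Rightarrow> 'a \<Rightarrow> 'a) \<Rightarrow> ('a \<Rightarrow> 'a \<Rightarrow> 'a) \<Rightarrow> ('a \<Rightarrow> 'a) \<Rightarrow> bool" where
  "hom_poisson sc m b \<alpha> \<longleftrightarrow> comm_hom_assoc sc m \<alpha> \<and> hom_lie sc b \<alpha> \<and>
     (\<forall>x y z. b (\<alpha> x) (m y z) = m (\<alpha> y) (b x z) + m (\<alpha> z) (b x y))"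

definition derivation :: "(complex \<Rightarrow> 'a::ab_group_add \<Rightarrow> 'a) \<Rightarrow> ('a \<Rightarrow> 'a \<Rightarrow> 'a) \<Rightarrow> ('a \<Rightarrow> 'a) \<Rightarrow> bool" where
  "derivation sc m D \<longleftrightarrow> clin sc D \<and> (\<forall>x y. D (m x y) = m (D x) y + m x (D y))"

definition hom_novikov :: "(complex \<Rightarrow> 'a::ab_group_add \<Rightarrow> 'a) \<Rightarrow> ('a \<Rightarrow> 'a \<Rightarrow> 'a) \<Rightarrow> ('a \<Rightarrow> 'a) \<Rightarrow> bool" where
  "hom_novikov sc c \<alpha> \<longleftrightarrow> vector_space sc \<and> cbilinear sc c \<and> clin sc \<alpha> \<and>
     (\<forall>x y z. c (c x y) (\<alpha> z) - c (\<alpha> x) (c y z) = c (c y x) (\<alpha> z) - c (\<alpha> y) (c x z)) \<and>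
     (\<forall>x y z. c (c x y) (\<alpha> z) = c (c x z) (\<alpha> y))"

definition hom_GD_bialgebra :: "(complex \<Rightarrow> 'a::ab_group_add \<Rightarrow> 'a) \<Rightarrow> ('a \<Rightarrow> 'a \<Rightarrow> 'a) \<Rightarrow> ('a \<Rightarrow> 'a \<Rightarrow> 'a) \<Rightarrow> ('a \<Rightarrow> 'a) \<Rightarrow> bool" where
  "hom_GD_bialgebra sc b c \<alpha> \<longleftrightarrow> hom_lie sc b \<alpha> \<and> hom_novikov sc c \<alpha> \<and>
     (\<forall>x y z. b (c x y) (\<alpha> z) - b (c x z) (\<alpha> y) + c (b x y) (\<alpha> z) - c (b x z) (\<alpha> y)
              - c (\<alpha> x) (b y z) = 0)"

end

theory Submission
  imports Defs
begin

text \<open>Write \<open>E = D + \<lambda> id\<close>, so that \<open>x \<circ> y = x \<cdot> E y\<close>. By the hypotheses \<open>E\<close> is an honest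
  derivation of the bracket and commutes with \<open>\<alpha>\<close>, while on the product it satisfies the twisted
  Leibniz rule \<open>E (x \<cdot> y) = E x \<cdot> y + x \<cdot> D y\<close>. For the Novikov identities only this twisted rule,
  commutativity and Hom-associativity are needed: the left-symmetric defect of \<open>\<circ>\<close> reduces to
  \<open>-\<alpha> x \<cdot> (y \<cdot> D (E z))\<close>, which is symmetric in \<open>x, y\<close>. The compatibility with the bracket
  follows by expanding both brackets of products with the Hom-Leibniz rule and \<open>E [y, z]\<close> with
  the derivation rule; all terms cancel in pairs.\<close>

lemma clin_add: "clin sc f \<Longrightarrow> f (x + y) = f x + f y"
  unfolding clin_def Vector_Spaces.linear_iff by blast

lemma clin_scale: "clin sc f \<Longrightarrow> f (sc c x) = sc c (f x)"
  unfolding clin_def Vector_Spaces.linear_iff by blast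

lemma clin_minus: "clin sc f \<Longrightarrow> f (- x) = - f x"
  by (rule additive.minus) (unfold_locales, rule clin_add)

lemma clinI:
  assumes "vector_space sc" "\<And>x y. f (x + y) = f x + f y" "\<And>c x. f (sc c x) = sc c (f x)"
  shows "clin sc f"
  using assms unfolding clin_def Vector_Spaces.linear_iff by blast

lemma cbilinear_clin_right: "cbilinear sc m \<Longrightarrow> clin sc (m x)"
  unfolding cbilinear_def by blast

lemma cbilinear_clin_left: "cbilinear sc m \<Longrightarrow> clin sc (\<lambda>y. m y x)"
  unfolding cbilinear_def by blast

lemma cbilinear_compose_right:
  assumes "vector_space sc" "cbilinear sc m" "clin sc E"
  shows "cbilinear sc (\<lambda>x y. m x (E y))"
  unfolding cbilinear_def
proof (intro conjI allI)
  fix x y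
  show "clin sc (\<lambda>y. m x (E y))"
    using assms clin_add[OF cbilinear_clin_right[OF assms(2)]] clin_add[OF assms(3)]
      clin_scale[OF cbilinear_clin_right[OF assms(2)]] clin_scale[OF assms(3)]
    by (intro clinI) simp_all
  show "clin sc (\<lambda>x. m x (E y))"
    by (rule cbilinear_clin_left[OF assms(2)])
qed

lemma comm_hom_assoc_left_commute:
  assumes "comm_hom_assoc sc m \<alpha>"
  shows "m (\<alpha> x) (m y z) = m (\<alpha> y) (m x z)"
  using assms unfolding comm_hom_assoc_def hom_assoc_def by metis

lemma hom_novikov_of_comm_hom_assoc:
  assumes cha: "comm_hom_assoc sc m \<alpha>" and E: "clin sc E"
    and E_\<alpha>: "\<And>x. E (\<alpha> x) = \<alpha> (E x)"
    and E_mult: "\<And>x y. E (m x y) = m (E x) y + m x (F y)"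
  shows "hom_novikov sc (\<lambda>x y. m x (E y)) \<alpha>"
proof -
  from cha have vs: "vector_space sc" and bil: "cbilinear sc m" and \<alpha>: "clin sc \<alpha>"
    and assoc: "\<And>x y z. m (\<alpha> x) (m y z) = m (m x y) (\<alpha> z)"
    and comm: "\<And>x y. m x y = m y x"
    unfolding comm_hom_assoc_def hom_assoc_def by blast+
  note m_right = cbilinear_clin_right[OF bil]
  have left_symm_defect:
    "m (m x (E y)) (E (\<alpha> z)) - m (\<alpha> x) (E (m y (E z))) = - m (\<alpha> x) (m y (F (E z)))" for x y z
    by (simp add: E_\<alpha> E_mult assoc[symmetric] clin_add[OF m_right])
  have "m (m x (E y)) (E (\<alpha> z)) = m (m x (E z)) (E (\<alpha> y))" for x y z
    by (metis E_\<alpha> assoc comm)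
  moreover have "m (m x (E y)) (E (\<alpha> z)) - m (\<alpha> x) (E (m y (E z))) =
      m (m y (E x)) (E (\<alpha> z)) - m (\<alpha> y) (E (m x (E z)))" for x y z
    unfolding left_symm_defect using comm_hom_assoc_left_commute[OF cha] by simp
  ultimately show ?thesis
    unfolding hom_novikov_def using vs \<alpha> cbilinear_compose_right[OF vs bil E] by blast
qed

lemma hom_poisson_bracket_mult_left:
  assumes "hom_poisson sc m b \<alpha>"
  shows "b (m u v) (\<alpha> w) = m (\<alpha> u) (b v w) + m (\<alpha> v) (b u w)"
proof -
  from assms have anti: "\<And>x y. b x y = - b y x" and m_right: "\<And>x. clin sc (m x)"
    and leibniz: "\<And>x y z. b (\<alpha> x) (m y z) = m (\<alpha> y) (b x z) + m (\<alpha> z) (b x y)"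
    unfolding hom_poisson_def comm_hom_assoc_def hom_assoc_def hom_lie_def cbilinear_def
    by blast+
  have "b (m u v) (\<alpha> w) = - (m (\<alpha> u) (b w v) + m (\<alpha> v) (b w u))"
    by (simp only: anti[of "m u v"] leibniz)
  also have "\<dots> = m (\<alpha> u) (b v w) + m (\<alpha> v) (b u w)"
    using anti[of w v] anti[of w u] by (simp add: clin_minus[OF m_right])
  finally show ?thesis .
qed

lemma hom_GD_compatibility_of_hom_poisson:
  assumes P: "hom_poisson sc m b \<alpha>"
    and E_\<alpha>: "\<And>x. E (\<alpha> x) = \<alpha> (E x)"
    and E_bracket: "\<And>x y. E (b x y) = b (E x) y + b x (E y)"
  shows "b (m x (E y)) (\<alpha> z) - b (m x (E z)) (\<alpha> y) + m (b x y) (E (\<alpha> z))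
           - m (b x z) (E (\<alpha> y)) - m (\<alpha> x) (E (b y z)) = 0"
proof -
  from P have anti: "\<And>x y. b x y = - b y x" and m_right: "\<And>x. clin sc (m x)"
    and comm: "\<And>x y. m x y = m y x"
    unfolding hom_poisson_def comm_hom_assoc_def hom_assoc_def hom_lie_def cbilinear_def
    by blast+
  have "b (m x (E y)) (\<alpha> z) = m (\<alpha> x) (b (E y) z) + m (\<alpha> (E y)) (b x z)"
    by (rule hom_poisson_bracket_mult_left[OF P])
  moreover have "b (m x (E z)) (\<alpha> y) = - m (\<alpha> x) (b y (E z)) + m (\<alpha> (E z)) (b x y)"
    using hom_poisson_bracket_mult_left[OF P, of x "E z" y] anti[of "E z" y]
    by (simp add: clin_minus[OF m_right])
  moreover have "m (\<alpha> x) (E (b y z)) = m (\<alpha> x) (b (E y) z) + m (\<alpha> x) (b y (E z))"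
    by (simp only: E_bracket clin_add[OF m_right])
  ultimately show ?thesis
    by (simp add: E_\<alpha> comm[of "b x y"] comm[of "b x z"])
qed

theorem hom_GD_bialgebra_of_hom_poisson:
  assumes P: "hom_poisson sc m b \<alpha>" and E: "clin sc E"
    and E_\<alpha>: "\<And>x. E (\<alpha> x) = \<alpha> (E x)"
    and E_bracket: "\<And>x y. E (b x y) = b (E x) y + b x (E y)"
    and E_mult: "\<And>x y. E (m x y) = m (E x) y + m x (F y)"
  shows "hom_GD_bialgebra sc b (\<lambda>x y. m x (E y)) \<alpha>"
proof -
  from P have cha: "comm_hom_assoc sc m \<alpha>" and lie: "hom_lie sc b \<alpha>"
    unfolding hom_poisson_def by blast+
  have "hom_novikov sc (\<lambda>x y. m x (E y)) \<alpha>"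
    using cha E E_\<alpha> E_mult by (rule hom_novikov_of_comm_hom_assoc)
  moreover have "b (m x (E y)) (\<alpha> z) - b (m x (E z)) (\<alpha> y) + m (b x y) (E (\<alpha> z))
      - m (b x z) (E (\<alpha> y)) - m (\<alpha> x) (E (b y z)) = 0" for x y z
    using P E_\<alpha> E_bracket by (rule hom_GD_compatibility_of_hom_poisson)
  ultimately show ?thesis
    unfolding hom_GD_bialgebra_def using lie by blast
qed

lemma shifted_derivation_mult:
  assumes "derivation sc m D" "cbilinear sc m"
  shows "D (m x y) + sc lam (m x y) = m (D x + sc lam x) y + m x (D y)"
  using assms(1) clin_add[OF cbilinear_clin_left[OF assms(2)]]
    clin_scale[OF cbilinear_clin_left[OF assms(2)]]
  unfolding derivation_def by (simp add: algebra_simps)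

lemma shifted_derivation_bracket:
  assumes bil: "cbilinear sc b"
    and D_bracket: "\<forall>x y. D (b x y) = b (D x) y + b x (D y) + sc lam (b x y)"
  shows "D (b x y) + sc lam (b x y) = b (D x + sc lam x) y + b x (D y + sc lam y)"
proof -
  note b_left = cbilinear_clin_left[OF bil] and b_right = cbilinear_clin_right[OF bil]
  have "b (D x + sc lam x) y + b x (D y + sc lam y)
      = b (D x) y + b x (D y) + sc lam (b x y) + sc lam (b x y)"
    by (simp add: clin_add[OF b_left] clin_add[OF b_right]
        clin_scale[OF b_left] clin_scale[OF b_right] add.assoc add.left_commute)
  then show ?thesis using D_bracket by simp
qed

theorem theorem3p15:
  fixes sc :: "complex \<Rightarrow> 'a::ab_group_add \<Rightarrow> 'a"
    and m b :: "'a \<Rightarrow> 'a \<Rightarrow> 'a" and \<alpha> D :: "'a \<Rightarrow> 'a" and lam :: complex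
  assumes "hom_poisson sc m b \<alpha>"
    and "derivation sc m D"
    and "\<forall>x. D (\<alpha> x) = \<alpha> (D x)"
    and "\<forall>x y. D (b x y) = b (D x) y + b x (D y) + sc lam (b x y)"
  shows "hom_GD_bialgebra sc b (\<lambda>x y. m x (D y) + sc lam (m x y)) \<alpha>"
proof -
  define E where "E y = D y + sc lam y" for y
  from assms(1) have vs: "vector_space sc" and bil_m: "cbilinear sc m"
    and bil_b: "cbilinear sc b" and \<alpha>: "clin sc \<alpha>"
    unfolding hom_poisson_def comm_hom_assoc_def hom_assoc_def hom_lie_def by blast+
  interpret vector_space sc by (rule vs)
  from assms(2) have D: "clin sc D" unfolding derivation_def by blast
  have E: "clin sc E"
    by (rule clinI[OF vs]) (simp_all add: E_def clin_add[OF D] clin_scale[OF D]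
        scale_right_distrib scale_left_commute)
  have E_\<alpha>: "E (\<alpha> x) = \<alpha> (E x)" for x
    using assms(3) by (simp add: E_def clin_add[OF \<alpha>] clin_scale[OF \<alpha>])
  have E_bracket: "E (b x y) = b (E x) y + b x (E y)" for x y
    unfolding E_def using bil_b assms(4) by (rule shifted_derivation_bracket)
  have E_mult: "E (m x y) = m (E x) y + m x (D y)" for x y
    unfolding E_def by (rule shifted_derivation_mult[OF assms(2) bil_m])
  have circ_eq: "(\<lambda>x y. m x (D y) + sc lam (m x y)) = (\<lambda>x y. m x (E y))"
    by (simp add: E_def clin_add[OF cbilinear_clin_right[OF bil_m]]
        clin_scale[OF cbilinear_clin_right[OF bil_m]])
  show ?thesis
    unfolding circ_eq using assms(1) E E_\<alpha> E_bracket E_mult by (rule hom_GD_bialgebra_of_hom_poisson)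
qed

end
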